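(* Let $\theta^k\in\mathcal F$ and let $\theta^{k+1}$ be obtained from $\theta^k$ by one iteration of the generalized SMO algorithm (with $\Delta^k>\tau\ge0$). (a) If the block $\alpha$ is selected with pair $(i,j)$, then $\alpha^{k+1}\neq\alpha^k$ and $(i,j)$ is not a violating pair at $\theta^{k+1}$, i.e. it is neither the case that [$i\in I_{up}(\alpha^{k+1})$, $j\in I_{low}(\alpha^{k+1})$ and $\nabla_{\alpha_i}f(\theta^{k+1})<\nabla_{\alpha_j}f(\theta^{k+1})$], nor that [$i\in I_{low}(\alpha^{k+1})$, $j\in I_{up}(\alpha^{k+1})$ and $\nabla_{\alpha_i}f(\theta^{k+1})>\nabla_{\alpha_j}f(\theta^{k+1})$]. The analogous statement holds for the block $\alpha^*$ with pair $(i^*,j^* )$ and index sets $I^*_{up},I^*_{low}$. (b) If the block $\gamma$ is selected with index $u$, then $\nabla_{\gamma_u}f(\theta^{k+1})\ge0$. (c) If the block $\mu$ is selected with index $u$, then $\nabla_{\mu_u}f(\theta^{k+1})=0$.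
   Context: Setup. Let $n,p,k_1,k_2\ge1$, $X\in\mathbb{R}^{n\times p}$ with rows $X_{i:}$, $y\in\mathbb{R}^n$, $C>0$, $\nu\in(0,1]$, $A\in\mathbb{R}^{k_1\times p}$, $b\in\mathbb{R}^{k_1}$, $\Gamma\in\mathbb{R}^{k_2\times p}$, $d\in\mathbb{R}^{k_2}$; $\mathbf e$ is the all-ones vector and $Q=XX^T\in\mathbb{R}^{n\times n}$. Dual variables are $\theta=(\alpha,\alpha^*,\gamma,\mu)\in\mathbb{R}^n\times\mathbb{R}^n\times\mathbb{R}^{k_1}\times\mathbb{R}^{k_2}$. Let $M$ be the $(2n+k_1+k_2)\times p$ matrix with row blocks $X,-X,A,-\Gamma$, $\bar Q=MM^T$, $l=(y,-y,b,-d)$, and $f(\theta)=\frac12\theta^T\bar Q\theta+l^T\theta$; equivalently $f(\theta)=\frac12\|\beta(\theta)\|^2+y^T(\alpha-\alpha^* )+b^T\gamma-d^T\mu$ with $\beta(\theta)=-\sum_{i=1}^n(\alpha_i-\alpha_i^* )X_{i:}-A^T\gamma+\Gamma^T\mu$. The feasible set $\mathcal F$ consists of $\theta$ with $0\le\alpha_i,\alpha_i^*\le C/n$ for all $i$, $\mathbf e^T(\alpha+\alpha^* )\le C\nu$, $\mathbf e^T(\alpha-\alpha^* )=0$, $\gamma_j\ge0$ for all $j$. Generalized SMO algorithm. Assume the rows of $X$ are pairwise distinct and no row of $A$ or $\Gamma$ is zero. Let $I_{up}(\alpha)=\{i:\alpha_i<C/n\}$, $I_{low}(\alpha)=\{i:\alpha_i>0\}$,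 and $I^*_{up},I^*_{low}$ the same sets for $\alpha^*$. Fix $\tau\ge0$ and $\theta^0\in\mathcal F$. At iteration $k$, with all gradients evaluated at $\theta^k$: pick $i\in\arg\min_{I_{up}(\alpha^k)}\nabla_{\alpha_i}f$, $j\in\arg\max_{I_{low}(\alpha^k)}\nabla_{\alpha_j}f$ and set $\Delta_1=\max(\nabla_{\alpha_j}f-\nabla_{\alpha_i}f,0)$ ($\Delta_1=0$ if either set is empty); define $i^*,j^*,\Delta_2$ identically for $\alpha^*$; $\Delta_3=\max(-\min_{s}\nabla_{\gamma_s}f,0)$; $\Delta_4=\max_s|\nabla_{\mu_s}f|$; $\Delta^k=\max(\Delta_1,\Delta_2,\Delta_3,\Delta_4)$. If $\Delta^k\le\tau$ stop; otherwise update the first block (in the order $\alpha,\alpha^*,\gamma,\mu$) whose $\Delta_m$ equals $\Delta^k$, leaving all other coordinates unchanged: Block $\alpha$: $t_q=-\frac{\nabla_{\alpha_i}f-\nabla_{\alpha_j}f}{Q_{ii}+Q_{jj}-2Q_{ij}}$, $I_1=\max(-\alpha_i^k,\alpha_j^k-C/n)$, $I_2=\min(\alpha_j^k,C/n-\alpha_i^k)$, $t^*=\min(\max(I_1,t_q),I_2)$, $\alpha_i^{k+1}=\alpha_i^k+t^*$, $\alpha_j^{k+1}=\alpha_j^k-t^*$. Block $\alpha^*$: the same formulas with $\alpha^*$, $(i^*,j^* )$, $\nabla_{\alpha^*}f$ and the same matrix $Q$. Block $\gamma$: $u\in\arg\min_s\nabla_{\gamma_s}f$, $\gamma_u^{k+1}=\max\big(\gamma_u^k-\nabla_{\gamma_u}f/(AA^T)_{uu},0\big)$.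 Block $\mu$: $u\in\arg\max_s|\nabla_{\mu_s}f|$, $\mu_u^{k+1}=\mu_u^k-\nabla_{\mu_u}f/(\Gamma\Gamma^T)_{uu}$. *)

theory Defs
  imports Complex_Main
begin

text \<open>Problem data. Vectors are functions nat => real indexed by 0..<dim,
  matrices are nat => nat => real indexed by (row, column).\<close>
record svr =
  nS  :: nat
  pS  :: nat
  k1S :: nat
  k2S :: nat
  XS  :: "nat \<Rightarrow> nat \<Rightarrow> real"
  yS  :: "nat \<Rightarrow> real"
  AS  :: "nat \<Rightarrow> nat \<Rightarrow> real"
  bS  :: "nat \<Rightarrow> real"
  GS  :: "nat \<Rightarrow> nat \<Rightarrow> real"
  dS  :: "nat \<Rightarrow> real"
  CS  :: real
  nuS :: real

record dual =
  al  :: "nat \<Rightarrow> real"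
  als :: "nat \<Rightarrow> real"
  gm  :: "nat \<Rightarrow> real"
  mu  :: "nat \<Rightarrow> real"

definition valid_data :: "svr \<Rightarrow> bool" where
  "valid_data P \<longleftrightarrow> nS P \<ge> 1 \<and> pS P \<ge> 1 \<and> k1S P \<ge> 1 \<and> k2S P \<ge> 1 \<and>
     CS P > 0 \<and> 0 < nuS P \<and> nuS P \<le> 1"

definition beta :: "svr \<Rightarrow> dual \<Rightarrow> nat \<Rightarrow> real" where
  "beta P th l = - (\<Sum>i<nS P. (al th i - als th i) * XS P i l)
                 - (\<Sum>j<k1S P. AS P j l * gm th j)
                 + (\<Sum>s<k2S P. GS P s l * mu th s)"

definition fobj :: "svr \<Rightarrow> dual \<Rightarrow> real" where
  "fobj P th = (\<Sum>l<pS P. (beta P th l)\<^sup>2) / 2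
     + (\<Sum>i<nS P. yS P i * (al th i - als th i))
     + (\<Sum>j<k1S P. bS P j * gm th j) - (\<Sum>s<k2S P. dS P s * mu th s)"

definition grad_al :: "svr \<Rightarrow> dual \<Rightarrow> nat \<Rightarrow> real" where
  "grad_al P th i = - (\<Sum>l<pS P. beta P th l * XS P i l) + yS P i"
definition grad_als :: "svr \<Rightarrow> dual \<Rightarrow> nat \<Rightarrow> real" where
  "grad_als P th i = (\<Sum>l<pS P. beta P th l * XS P i l) - yS P i"
definition grad_gm :: "svr \<Rightarrow> dual \<Rightarrow> nat \<Rightarrow> real" where
  "grad_gm P th j = - (\<Sum>l<pS P. beta P th l * AS P j l) + bS P j"
definition grad_mu :: "svr \<Rightarrow> dual \<Rightarrow> nat \<Rightarrow> real" where
  "grad_mu P th s = (\<Sum>l<pS P. beta P th l * GS P s l) - dS P s"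

definition QX :: "svr \<Rightarrow> nat \<Rightarrow> nat \<Rightarrow> real" where
  "QX P i j = (\<Sum>l<pS P. XS P i l * XS P j l)"

definition feasible :: "svr \<Rightarrow> dual \<Rightarrow> bool" where
  "feasible P th \<longleftrightarrow>
     (\<forall>i<nS P. 0 \<le> al th i \<and> al th i \<le> CS P / real (nS P)
              \<and> 0 \<le> als th i \<and> als th i \<le> CS P / real (nS P))
   \<and> (\<Sum>i<nS P. al th i + als th i) \<le> CS P * nuS P
   \<and> (\<Sum>i<nS P. al th i - als th i) = 0
   \<and> (\<forall>j<k1S P. 0 \<le> gm th j)"

definition smo_assumptions :: "svr \<Rightarrow> bool" where
  "smo_assumptions P \<longleftrightarrow>
     (\<forall>i<nS P. \<forall>j<nS P. i \<noteq> j \<longrightarrow> (\<lambda>l. if l < pS P then XS P i l else 0) \<noteq> (\<lambda>l. if l < pS P then XS P j l else 0))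
   \<and> (\<forall>j<k1S P. \<exists>l<pS P. AS P j l \<noteq> 0)
   \<and> (\<forall>s<k2S P. \<exists>l<pS P. GS P s l \<noteq> 0)"

definition I_up :: "svr \<Rightarrow> (nat \<Rightarrow> real) \<Rightarrow> nat set" where
  "I_up P a = {i. i < nS P \<and> a i < CS P / real (nS P)}"
definition I_low :: "svr \<Rightarrow> (nat \<Rightarrow> real) \<Rightarrow> nat set" where
  "I_low P a = {i. i < nS P \<and> a i > 0}"

definition delta_pair :: "svr \<Rightarrow> (nat \<Rightarrow> real) \<Rightarrow> (nat \<Rightarrow> real) \<Rightarrow> real" where
  "delta_pair P a g =
     (if I_up P a = {} \<or> I_low P a = {} then 0
      else max ((MAX j\<in>I_low P a. g j) - (MIN i\<in>I_up P a. g i)) 0)"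

definition delta1 :: "svr \<Rightarrow> dual \<Rightarrow> real" where
  "delta1 P th = delta_pair P (al th) (grad_al P th)"
definition delta2 :: "svr \<Rightarrow> dual \<Rightarrow> real" where
  "delta2 P th = delta_pair P (als th) (grad_als P th)"
definition delta3 :: "svr \<Rightarrow> dual \<Rightarrow> real" where
  "delta3 P th = max (- (MIN s\<in>{..<k1S P}. grad_gm P th s)) 0"
definition delta4 :: "svr \<Rightarrow> dual \<Rightarrow> real" where
  "delta4 P th = (MAX s\<in>{..<k2S P}. \<bar>grad_mu P th s\<bar>)"
definition delta :: "svr \<Rightarrow> dual \<Rightarrow> real" where
  "delta P th = max (max (delta1 P th) (delta2 P th)) (max (delta3 P th) (delta4 P th))"

definition tstar :: "svr \<Rightarrow> (nat \<Rightarrow> real) \<Rightarrow> (nat \<Rightarrow> real) \<Rightarrow> nat \<Rightarrow> nat \<Rightarrow> real" where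
  "tstar P a g i j =
     (let tq = - (g i - g j) / (QX P i i + QX P j j - 2 * QX P i j);
          I1 = max (- a i) (a j - CS P / real (nS P));
          I2 = min (a j) (CS P / real (nS P) - a i)
      in min (max I1 tq) I2)"

definition pair_update :: "svr \<Rightarrow> (nat \<Rightarrow> real) \<Rightarrow> (nat \<Rightarrow> real) \<Rightarrow> nat \<Rightarrow> nat \<Rightarrow> nat \<Rightarrow> real" where
  "pair_update P a g i j =
     (let t = tstar P a g i j in a(i := a i + t, j := a j - t))"

datatype block = BAlpha nat nat | BAlphaS nat nat | BGamma nat | BMu nat

definition pair_selected :: "svr \<Rightarrow> (nat \<Rightarrow> real) \<Rightarrow> (nat \<Rightarrow> real) \<Rightarrow> nat \<Rightarrow> nat \<Rightarrow> bool" where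
  "pair_selected P a g i j \<longleftrightarrow>
     i \<in> I_up P a \<and> (\<forall>i'\<in>I_up P a. g i \<le> g i') \<and>
     j \<in> I_low P a \<and> (\<forall>j'\<in>I_low P a. g j' \<le> g j)"

text \<open>One (non-stopping) iteration of the generalized SMO algorithm from th to th',
  selecting block blk. The argmin/argmax choices are arbitrary (nondeterministic).\<close>
definition smo_step :: "svr \<Rightarrow> real \<Rightarrow> dual \<Rightarrow> dual \<Rightarrow> block \<Rightarrow> bool" where
  "smo_step P tau th th' blk \<longleftrightarrow> delta P th > tau \<and>
     (case blk of
        BAlpha i j \<Rightarrow> delta1 P th = delta P th
          \<and> pair_selected P (al th) (grad_al P th) i j
          \<and> th' = th\<lparr>al := pair_update P (al th) (grad_al P th) i j\<rparr>
      | BAlphaS i j \<Rightarrow> delta1 P th \<noteq> delta P th \<and> delta2 P th = delta P th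
          \<and> pair_selected P (als th) (grad_als P th) i j
          \<and> th' = th\<lparr>als := pair_update P (als th) (grad_als P th) i j\<rparr>
      | BGamma u \<Rightarrow> delta1 P th \<noteq> delta P th \<and> delta2 P th \<noteq> delta P th
          \<and> delta3 P th = delta P th
          \<and> u < k1S P \<and> (\<forall>s<k1S P. grad_gm P th u \<le> grad_gm P th s)
          \<and> th' = th\<lparr>gm := (gm th)(u := max (gm th u - grad_gm P th u
                                   / (\<Sum>l<pS P. (AS P u l)\<^sup>2)) 0)\<rparr>
      | BMu u \<Rightarrow> delta1 P th \<noteq> delta P th \<and> delta2 P th \<noteq> delta P th
          \<and> delta3 P th \<noteq> delta P th \<and> delta4 P th = delta P th
          \<and> u < k2S P \<and> (\<forall>s<k2S P. \<bar>grad_mu P th s\<bar> \<le> \<bar>grad_mu P th u\<bar>)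
          \<and> th' = th\<lparr>mu := (mu th)(u := mu th u - grad_mu P th u
                                   / (\<Sum>l<pS P. (GS P u l)\<^sup>2))\<rparr>)"

definition violating :: "svr \<Rightarrow> (nat \<Rightarrow> real) \<Rightarrow> (nat \<Rightarrow> real) \<Rightarrow> nat \<Rightarrow> nat \<Rightarrow> bool" where
  "violating P a g i j \<longleftrightarrow>
     (i \<in> I_up P a \<and> j \<in> I_low P a \<and> g i < g j) \<or>
     (i \<in> I_low P a \<and> j \<in> I_up P a \<and> g i > g j)"

end

theory Submission
  imports Defs
begin

(* Each block update minimises the quadratic f exactly along one feasible direction and then
   clips to the constraints.  Along e_i - e_j the difference of the partial derivatives in i and j
   grows at rate Q_ii + Q_jj - 2 Q_ij = |X_i - X_j|^2 > 0 (the rows are distinct), so the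
   unclipped Newton step makes the two partial derivatives equal; the step is clipped only when
   alpha_i reaches C/n or alpha_j reaches 0, which removes i from I_up or j from I_low.  For gamma_u
   the Newton step projected onto gamma_u >= 0 leaves a nonnegative partial derivative, and for
   mu_u the unconstrained Newton step makes it vanish. *)

lemma sum_fun_upd:
  fixes h :: "'a \<Rightarrow> 'b \<Rightarrow> 'c::ab_group_add"
  assumes "finite A" "u \<in> A"
  shows "(\<Sum>k\<in>A. h k ((f(u := v)) k)) = (\<Sum>k\<in>A. h k (f k)) + (h u v - h u (f u))"
proof -
  have "(\<Sum>k\<in>A. h k ((f(u := v)) k)) = h u v + (\<Sum>k\<in>A - {u}. h k (f k))"
    using assms by (simp add: sum.remove)
  also have "\<dots> = (\<Sum>k\<in>A. h k (f k)) + (h u v - h u (f u))"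
    using assms by (simp add: sum.remove)
  finally show ?thesis .
qed

lemma beta_al_pair_update:
  assumes "i \<noteq> j" "i < nS P" "j < nS P"
  shows "beta P (th\<lparr>al := (al th)(i := al th i + t, j := al th j - t)\<rparr>) l
           = beta P th l - t * (XS P i l - XS P j l)"
  using assms not_sym[OF assms(1)]
  by (simp add: beta_def sum_fun_upd[where h = "\<lambda>k x. (x - als th k) * XS P k l"] del: fun_upd_apply)
    (simp add: algebra_simps)

lemma beta_als_pair_update:
  assumes "i \<noteq> j" "i < nS P" "j < nS P"
  shows "beta P (th\<lparr>als := (als th)(i := als th i + t, j := als th j - t)\<rparr>) l
           = beta P th l + t * (XS P i l - XS P j l)"
  using assms not_sym[OF assms(1)]
  by (simp add: beta_def sum_fun_upd[where h = "\<lambda>k x. (al th k - x) * XS P k l"] del: fun_upd_apply)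
    (simp add: algebra_simps)

lemma beta_gm_update:
  assumes "u < k1S P"
  shows "beta P (th\<lparr>gm := (gm th)(u := v)\<rparr>) l = beta P th l - AS P u l * (v - gm th u)"
  using assms
  by (simp add: beta_def sum_fun_upd[where h = "\<lambda>k x. AS P k l * x"] algebra_simps
      del: fun_upd_apply)

lemma beta_mu_update:
  assumes "u < k2S P"
  shows "beta P (th\<lparr>mu := (mu th)(u := v)\<rparr>) l = beta P th l + GS P u l * (v - mu th u)"
  using assms
  by (simp add: beta_def sum_fun_upd[where h = "\<lambda>k x. GS P k l * x"] algebra_simps
      del: fun_upd_apply)

lemma grad_al_pair_update:
  assumes "i \<noteq> j" "i < nS P" "j < nS P"
  shows "grad_al P (th\<lparr>al := (al th)(i := al th i + t, j := al th j - t)\<rparr>) m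
           = grad_al P th m + t * (QX P i m - QX P j m)"
  unfolding grad_al_def beta_al_pair_update[OF assms] QX_def
  by (simp add: algebra_simps sum.distrib sum_subtractf sum_distrib_left)

lemma grad_als_pair_update:
  assumes "i \<noteq> j" "i < nS P" "j < nS P"
  shows "grad_als P (th\<lparr>als := (als th)(i := als th i + t, j := als th j - t)\<rparr>) m
           = grad_als P th m + t * (QX P i m - QX P j m)"
  unfolding grad_als_def beta_als_pair_update[OF assms] QX_def
  by (simp add: algebra_simps sum.distrib sum_subtractf sum_distrib_left)

lemma grad_gm_update:
  assumes "u < k1S P"
  shows "grad_gm P (th\<lparr>gm := (gm th)(u := v)\<rparr>) u
           = grad_gm P th u + (v - gm th u) * (\<Sum>l<pS P. (AS P u l)\<^sup>2)"
  using assms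
  by (simp add: grad_gm_def beta_gm_update algebra_simps power2_eq_square sum.distrib sum_subtractf
      sum_distrib_left)

lemma grad_mu_update:
  assumes "u < k2S P"
  shows "grad_mu P (th\<lparr>mu := (mu th)(u := v)\<rparr>) u
           = grad_mu P th u + (v - mu th u) * (\<Sum>l<pS P. (GS P u l)\<^sup>2)"
  using assms
  by (simp add: grad_mu_def beta_mu_update algebra_simps power2_eq_square sum.distrib sum_subtractf
      sum_distrib_left)

lemma QX_sym: "QX P i j = QX P j i"
  unfolding QX_def by (simp add: mult.commute)

lemma QX_pair_curvature:
  "QX P i i + QX P j j - 2 * QX P i j = (\<Sum>l<pS P. (XS P i l - XS P j l)\<^sup>2)"
  unfolding QX_def
  by (simp add: power2_eq_square algebra_simps sum.distrib sum_subtractf sum_distrib_left)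

lemma QX_pair_curvature_pos:
  assumes "smo_assumptions P" "i < nS P" "j < nS P" "i \<noteq> j"
  shows "0 < QX P i i + QX P j j - 2 * QX P i j"
proof -
  have "(\<lambda>l. if l < pS P then XS P i l else 0) \<noteq> (\<lambda>l. if l < pS P then XS P j l else 0)"
    using assms unfolding smo_assumptions_def by blast
  then obtain l where "l < pS P" "XS P i l \<noteq> XS P j l"
    by (meson ext)
  then show ?thesis
    unfolding QX_pair_curvature by (intro sum_pos2[of _ l]) auto
qed

lemma row_norm_pos:
  fixes c :: "nat \<Rightarrow> real"
  assumes "\<exists>l<p. c l \<noteq> 0"
  shows "0 < (\<Sum>l<p. (c l)\<^sup>2)"
  using assms by (metis finite_lessThan lessThan_iff sum_pos2 zero_le_power2 zero_less_power2)

lemma delta_pair_pos_imp_gap: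
  assumes sel: "pair_selected P a g i j" and pos: "0 < delta_pair P a g"
  shows "g i < g j"
proof -
  have up: "i \<in> I_up P a" and low: "j \<in> I_low P a"
    using sel unfolding pair_selected_def by auto
  have fin: "finite (I_up P a)" "finite (I_low P a)"
    unfolding I_up_def I_low_def by auto
  have "(MAX j\<in>I_low P a. g j) = g j"
    using sel fin low unfolding pair_selected_def by (intro antisym Max.boundedI) auto
  moreover have "(MIN i\<in>I_up P a. g i) = g i"
    using sel fin up unfolding pair_selected_def by (intro antisym Min.boundedI) auto
  ultimately show ?thesis
    using pos up low unfolding delta_pair_def by (auto split: if_splits)
qed

lemma tstar_bounds:
  fixes P :: svr and a g :: "nat \<Rightarrow> real" and i j :: nat
  defines "D \<equiv> QX P i i + QX P j j - 2 * QX P i j" and "t \<equiv> tstar P a g i j"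
  assumes sel: "pair_selected P a g i j" and gap: "g i < g j" and curv: "0 < D"
    and box: "0 \<le> a i" "a j \<le> CS P / real (nS P)"
  shows "0 < t" and "t * D \<le> g j - g i"
    and "t * D = g j - g i \<or> t = a j \<or> a i + t = CS P / real (nS P)"
proof -
  define tq where "tq = (g j - g i) / D"
  define I1 where "I1 = max (- a i) (a j - CS P / real (nS P))"
  define I2 where "I2 = min (a j) (CS P / real (nS P) - a i)"
  have tq_pos: "0 < tq" and tq_D: "tq * D = g j - g i"
    using gap curv unfolding tq_def by auto
  have "I1 \<le> 0" using box unfolding I1_def by simp
  moreover have "0 < I2" using sel unfolding I2_def pair_selected_def I_up_def I_low_def by auto
  moreover have "t = min (max I1 tq) I2"
    unfolding t_def tstar_def Let_def tq_def I1_def I2_def D_def by (simp add: minus_diff_eq)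
  ultimately have "0 < t" "t \<le> tq" "t = tq \<or> t = a j \<or> t = CS P / real (nS P) - a i"
    using tq_pos unfolding I2_def by (auto simp: min_def max_def)
  moreover have "t * D \<le> tq * D"
    using \<open>t \<le> tq\<close> curv by (simp add: mult_right_mono)
  ultimately show "0 < t" "t * D \<le> g j - g i"
    and "t * D = g j - g i \<or> t = a j \<or> a i + t = CS P / real (nS P)"
    using tq_D by auto
qed

lemma pair_update_progress:
  assumes "smo_assumptions P" and sel: "pair_selected P a g i j" and gap: "g i < g j"
    and box: "0 \<le> a i" "a j \<le> CS P / real (nS P)"
    and grad': "\<And>m. g' m = g m + tstar P a g i j * (QX P i m - QX P j m)"
  shows "pair_update P a g i j \<noteq> a \<and> \<not> violating P (pair_update P a g i j) g' i j"
proof -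
  define t where "t = tstar P a g i j"
  have "i \<noteq> j" using gap by auto
  moreover have "i < nS P" "j < nS P"
    using sel unfolding pair_selected_def I_up_def I_low_def by auto
  ultimately have curv: "0 < QX P i i + QX P j j - 2 * QX P i j"
    using QX_pair_curvature_pos assms(1) by blast
  note step = tstar_bounds[OF sel gap curv box, folded t_def]
  have upd: "pair_update P a g i j = a(i := a i + t, j := a j - t)"
    unfolding pair_update_def Let_def t_def by simp
  have "g' i - g' j = g i - g j + t * (QX P i i + QX P j j - 2 * QX P i j)"
    using grad'[of i] grad'[of j] QX_sym[of P j i] unfolding t_def by (simp add: algebra_simps)
  then have "g' i \<le> g' j" and "g' i = g' j \<or> a j - t = 0 \<or> a i + t = CS P / real (nS P)"
    using step by auto
  then have "\<not> violating P (pair_update P a g i j) g' i j"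
    using upd \<open>i \<noteq> j\<close> unfolding violating_def I_up_def I_low_def by auto
  moreover have "pair_update P a g i j \<noteq> a"
    using upd \<open>i \<noteq> j\<close> step(1) by (auto dest: fun_cong[where x = i])
  ultimately show ?thesis by blast
qed

lemma smo_step_alpha:
  assumes "smo_assumptions P" "tau \<ge> 0" "feasible P th" "smo_step P tau th th' (BAlpha i j)"
  shows "al th' \<noteq> al th \<and> \<not> violating P (al th') (grad_al P th') i j"
proof -
  have sel: "pair_selected P (al th) (grad_al P th) i j"
    and th': "th' = th\<lparr>al := pair_update P (al th) (grad_al P th) i j\<rparr>"
    and "0 < delta1 P th"
    using assms(2,4) unfolding smo_step_def by auto
  then have gap: "grad_al P th i < grad_al P th j"
    unfolding delta1_def using delta_pair_pos_imp_gap by blast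
  have bounds: "i \<noteq> j" "i < nS P" "j < nS P"
    using gap sel unfolding pair_selected_def I_up_def I_low_def by auto
  then have "0 \<le> al th i" "al th j \<le> CS P / real (nS P)"
    using assms(3) unfolding feasible_def by auto
  moreover have "\<And>m. grad_al P th' m
      = grad_al P th m + tstar P (al th) (grad_al P th) i j * (QX P i m - QX P j m)"
    unfolding th' pair_update_def Let_def by (rule grad_al_pair_update[OF bounds])
  ultimately show ?thesis
    using pair_update_progress[OF assms(1) sel gap] th' by simp
qed

lemma smo_step_alphas:
  assumes "smo_assumptions P" "tau \<ge> 0" "feasible P th" "smo_step P tau th th' (BAlphaS i j)"
  shows "als th' \<noteq> als th \<and> \<not> violating P (als th') (grad_als P th') i j"
proof -
  have sel: "pair_selected P (als th) (grad_als P th) i j"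
    and th': "th' = th\<lparr>als := pair_update P (als th) (grad_als P th) i j\<rparr>"
    and "0 < delta2 P th"
    using assms(2,4) unfolding smo_step_def by auto
  then have gap: "grad_als P th i < grad_als P th j"
    unfolding delta2_def using delta_pair_pos_imp_gap by blast
  have bounds: "i \<noteq> j" "i < nS P" "j < nS P"
    using gap sel unfolding pair_selected_def I_up_def I_low_def by auto
  then have "0 \<le> als th i" "als th j \<le> CS P / real (nS P)"
    using assms(3) unfolding feasible_def by auto
  moreover have "\<And>m. grad_als P th' m
      = grad_als P th m + tstar P (als th) (grad_als P th) i j * (QX P i m - QX P j m)"
    unfolding th' pair_update_def Let_def by (rule grad_als_pair_update[OF bounds])
  ultimately show ?thesis
    using pair_update_progress[OF assms(1) sel gap] th' by simp
qed

lemma projected_newton_step_nonneg: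
  fixes g x N :: real
  assumes "0 < N"
  shows "0 \<le> g + (max (x - g / N) 0 - x) * N"
proof (cases "0 \<le> x - g / N")
  case True
  then show ?thesis using assms by (simp add: field_simps)
next
  case False
  then have "x * N < g" using assms by (simp add: field_simps)
  then show ?thesis using False by (simp add: algebra_simps)
qed

lemma smo_step_gamma:
  assumes "smo_assumptions P" "smo_step P tau th th' (BGamma u)"
  shows "0 \<le> grad_gm P th' u"
proof -
  define N where "N = (\<Sum>l<pS P. (AS P u l)\<^sup>2)"
  have "u < k1S P"
    and "th' = th\<lparr>gm := (gm th)(u := max (gm th u - grad_gm P th u / N) 0)\<rparr>"
    using assms(2) unfolding smo_step_def N_def by auto
  moreover have "0 < N"
    using assms(1) \<open>u < k1S P\<close> unfolding smo_assumptions_def N_def by (intro row_norm_pos) auto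
  ultimately show ?thesis
    by (simp add: grad_gm_update N_def[symmetric] projected_newton_step_nonneg)
qed

lemma smo_step_mu:
  assumes "smo_assumptions P" "smo_step P tau th th' (BMu u)"
  shows "grad_mu P th' u = 0"
proof -
  define N where "N = (\<Sum>l<pS P. (GS P u l)\<^sup>2)"
  have "u < k2S P"
    and "th' = th\<lparr>mu := (mu th)(u := mu th u - grad_mu P th u / N)\<rparr>"
    using assms(2) unfolding smo_step_def N_def by auto
  moreover have "0 < N"
    using assms(1) \<open>u < k2S P\<close> unfolding smo_assumptions_def N_def by (intro row_norm_pos) auto
  ultimately show ?thesis
    by (simp add: grad_mu_update N_def[symmetric])
qed

theorem proposition3p1:
  fixes P :: svr and tau :: real and th th' :: dual and blk :: block
  assumes "valid_data P"
    and "smo_assumptions P"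
    and "tau \<ge> 0"
    and "feasible P th"
    and "smo_step P tau th th' blk"
  shows "(case blk of
            BAlpha i j \<Rightarrow> al th' \<noteq> al th
                \<and> \<not> violating P (al th') (grad_al P th') i j
          | BAlphaS i j \<Rightarrow> als th' \<noteq> als th
                \<and> \<not> violating P (als th') (grad_als P th') i j
          | BGamma u \<Rightarrow> grad_gm P th' u \<ge> 0
          | BMu u \<Rightarrow> grad_mu P th' u = 0)"
proof (cases blk)
  case (BAlpha i j)
  then show ?thesis using smo_step_alpha assms(2-5) by simp
next
  case (BAlphaS i j)
  then show ?thesis using smo_step_alphas assms(2-5) by simp
next
  case (BGamma u)
  then show ?thesis using smo_step_gamma assms(2,5) by simp
next
  case (BMu u)
  then show ?thesis using smo_step_mu assms(2,5) by simp
qed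

end
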